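(* Let $\mathbb{F}$ be an algebraically closed field with $\mathrm{Char}(\mathbb{F})\ne2$, and let $y,z\in\mathbb{F}$ be nonzero with $y\neq1$, $y\neq-1$, $z\neq1$, $yz\neq1$, $(y+1)z\neq2$. Then the pair $A=\begin{pmatrix}0&z&0\\1&0&1-z\\0&1&0\end{pmatrix}$, $A^*=\begin{pmatrix}0&yz&0\\1&0&yz-1\\0&-1&0\end{pmatrix}$ is a Leonard pair in $\mathrm{Mat}_3(\mathbb{F})$, and it has a parameter array with $\theta_0=1,\theta_1=0,\theta_2=-1$, $\theta^*_0=1,\theta^*_1=0,\theta^*_2=-1$, $\varphi_1=\varphi_2=(y+1)z-2$, $\phi_1=\phi_2=(y+1)z$.
   Context: A Leonard pair in $\mathrm{Mat}_{d+1}(\mathbb{F})$ is a pair of matrices $A,A^*$ such that there is a basis of $\mathbb{F}^{d+1}$ in which $A$ is irreducible tridiagonal (tridiagonal with all sub/superdiagonal entries nonzero) and $A^*$ diagonal, and a basis in which $A^*$ is irreducible tridiagonal and $A$ diagonal. A Leonard system is $(A,\{E_i\}_{i=0}^d,A^*,\{E^*_i\}_{i=0}^d)$ where $A,A^*$ each have $d+1$ distinct eigenvalues, $\{E_i\},\{E^*_i\}$ are orderings of their primitive idempotents, and $E_iA^*E_j,E^*_iAE^*_j$ are $0$ for $|i-j|>1$ and nonzero for $|i-j|=1$. Eigenvalue sequences: $AE_i=\theta_iE_i$, $A^*E^*_i=\theta^*_iE^*_i$. First split sequence: for nonzero $v\in E^*_0V$, $u_i=(A-\theta_{i-1}I)\cdots(A-\theta_0I)v$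 form a basis in which $A^*$ is upper bidiagonal with diagonal $\theta^*_0,\dots,\theta^*_d$ and superdiagonal $\varphi_1,\dots,\varphi_d$. Second split sequence $\{\phi_i\}$: first split sequence of $(A,\{E_{d-i}\},A^*,\{E^*_i\})$. Parameter array $(\{\theta_i\},\{\theta^*_i\},\{\varphi_i\},\{\phi_i\})$; a parameter array of a Leonard pair is that of any associated Leonard system. *)

theory Defs
  imports "Jordan_Normal_Form.Matrix" "HOL-Computational_Algebra.Polynomial"
begin

definition alg_closed :: "'a::field itself \<Rightarrow> bool" where
  "alg_closed _ \<longleftrightarrow> (\<forall>p :: 'a poly. degree p > 0 \<longrightarrow> (\<exists>x. poly p x = 0))"

definition irred_tridiag :: "nat \<Rightarrow> 'a::field mat \<Rightarrow> bool" where
  "irred_tridiag n M \<longleftrightarrow> M \<in> carrier_mat n n \<and>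
     (\<forall>i<n. \<forall>j<n. (i + 1 < j \<or> j + 1 < i) \<longrightarrow> M $$ (i,j) = 0) \<and>
     (\<forall>i. i + 1 < n \<longrightarrow> M $$ (i, i+1) \<noteq> 0 \<and> M $$ (i+1, i) \<noteq> 0)"

(* Matrix of A w.r.t. the basis given by the columns of the invertible matrix P
   (with inverse Q) is Q * A * P. *)
definition basis_change :: "nat \<Rightarrow> 'a::field mat \<Rightarrow> 'a mat \<Rightarrow> bool" where
  "basis_change n P Q \<longleftrightarrow> P \<in> carrier_mat n n \<and> Q \<in> carrier_mat n n \<and>
     P * Q = 1\<^sub>m n \<and> Q * P = 1\<^sub>m n"

definition leonard_pair :: "nat \<Rightarrow> 'a::field mat \<Rightarrow> 'a mat \<Rightarrow> bool" where
  "leonard_pair d A B \<longleftrightarrow> A \<in> carrier_mat (d+1) (d+1) \<and> B \<in> carrier_mat (d+1) (d+1) \<and>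
     (\<exists>P Q. basis_change (d+1) P Q \<and> irred_tridiag (d+1) (Q * A * P) \<and> diagonal_mat (Q * B * P)) \<and>
     (\<exists>P Q. basis_change (d+1) P Q \<and> irred_tridiag (d+1) (Q * B * P) \<and> diagonal_mat (Q * A * P))"

(* E_0..E_d is an ordering of the primitive idempotents of A, where A has the
   d+1 distinct eigenvalues theta_0..theta_d and A E_i = theta_i E_i. *)
definition prim_idem_seq :: "nat \<Rightarrow> 'a::field mat \<Rightarrow> (nat \<Rightarrow> 'a mat) \<Rightarrow> (nat \<Rightarrow> 'a) \<Rightarrow> bool" where
  "prim_idem_seq d A E \<theta> \<longleftrightarrow> A \<in> carrier_mat (d+1) (d+1) \<and>
     inj_on \<theta> {0..d} \<and>
     (\<forall>i\<le>d. E i \<in> carrier_mat (d+1) (d+1) \<and> E i \<noteq> 0\<^sub>m (d+1) (d+1) \<and> A * E i = \<theta> i \<cdot>\<^sub>m E i) \<and>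
     (\<forall>i\<le>d. \<forall>j\<le>d. E i * E j = (if i = j then E i else 0\<^sub>m (d+1) (d+1))) \<and>
     (\<forall>r<d+1. \<forall>c<d+1. (\<Sum>i\<le>d. E i $$ (r,c)) = (1\<^sub>m (d+1)) $$ (r,c))"

definition leonard_system :: "nat \<Rightarrow> 'a::field mat \<Rightarrow> (nat \<Rightarrow> 'a mat) \<Rightarrow> (nat \<Rightarrow> 'a)
     \<Rightarrow> 'a mat \<Rightarrow> (nat \<Rightarrow> 'a mat) \<Rightarrow> (nat \<Rightarrow> 'a) \<Rightarrow> bool" where
  "leonard_system d A E \<theta> B Es \<theta>s \<longleftrightarrow>
     prim_idem_seq d A E \<theta> \<and> prim_idem_seq d B Es \<theta>s \<and>
     (\<forall>i\<le>d. \<forall>j\<le>d. (i + 1 < j \<or> j + 1 < i) \<longrightarrow>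
         E i * B * E j = 0\<^sub>m (d+1) (d+1) \<and> Es i * A * Es j = 0\<^sub>m (d+1) (d+1)) \<and>
     (\<forall>i\<le>d. \<forall>j\<le>d. (i + 1 = j \<or> j + 1 = i) \<longrightarrow>
         E i * B * E j \<noteq> 0\<^sub>m (d+1) (d+1) \<and> Es i * A * Es j \<noteq> 0\<^sub>m (d+1) (d+1))"

primrec split_vec :: "'a::field mat \<Rightarrow> (nat \<Rightarrow> 'a) \<Rightarrow> 'a vec \<Rightarrow> nat \<Rightarrow> 'a vec" where
  "split_vec A \<theta> v 0 = v"
| "split_vec A \<theta> v (Suc i) = (A - \<theta> i \<cdot>\<^sub>m 1\<^sub>m (dim_row A)) *\<^sub>v split_vec A \<theta> v i"

definition upper_bidiag :: "nat \<Rightarrow> (nat \<Rightarrow> 'a::field) \<Rightarrow> (nat \<Rightarrow> 'a) \<Rightarrow> 'a mat" where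
  "upper_bidiag d \<theta>s \<phi> = mat (d+1) (d+1)
     (\<lambda>(i,j). if i = j then \<theta>s i else if j = i + 1 then \<phi> j else 0)"

definition first_split_seq :: "nat \<Rightarrow> 'a::field mat \<Rightarrow> (nat \<Rightarrow> 'a mat) \<Rightarrow> (nat \<Rightarrow> 'a)
     \<Rightarrow> 'a mat \<Rightarrow> (nat \<Rightarrow> 'a mat) \<Rightarrow> (nat \<Rightarrow> 'a) \<Rightarrow> (nat \<Rightarrow> 'a) \<Rightarrow> bool" where
  "first_split_seq d A E \<theta> B Es \<theta>s \<phi> \<longleftrightarrow>
     (\<exists>v. v \<in> carrier_vec (d+1) \<and> v \<noteq> 0\<^sub>v (d+1) \<and> Es 0 *\<^sub>v v = v \<and>
        (let U = mat_of_cols (d+1) (map (split_vec A \<theta> v) [0..<d+1]) in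
          \<exists>Q. basis_change (d+1) U Q \<and> Q * B * U = upper_bidiag d \<theta>s \<phi>))"

definition parameter_array :: "nat \<Rightarrow> 'a::field mat \<Rightarrow> 'a mat \<Rightarrow> (nat \<Rightarrow> 'a) \<Rightarrow> (nat \<Rightarrow> 'a)
     \<Rightarrow> (nat \<Rightarrow> 'a) \<Rightarrow> (nat \<Rightarrow> 'a) \<Rightarrow> bool" where
  "parameter_array d A B \<theta> \<theta>s \<phi> \<phi>' \<longleftrightarrow>
     (\<exists>E Es. leonard_system d A E \<theta> B Es \<theta>s \<and>
        first_split_seq d A E \<theta> B Es \<theta>s \<phi> \<and>
        first_split_seq d A (\<lambda>i. E (d - i)) (\<lambda>i. \<theta> (d - i)) B Es \<theta>s \<phi>')"

end

theory Submission
  imports Defs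
begin

text \<open>
  Both matrices have the eigenvalues \<open>1, 0, -1\<close> (they satisfy \<open>M\<^sup>3 = M\<close>), so their
  primitive idempotents are the Lagrange interpolation polynomials in \<open>M\<close> at these eigenvalues.
  Everything else is an explicit \<open>3 \<times> 3\<close> computation: a basis is given by a matrix \<open>P\<close>
  with nonzero determinant, and \<open>M P = P T\<close> shows that \<open>M\<close> has the matrix \<open>T\<close> in it.
  The hypotheses that matter are \<open>(y + 1) z \<noteq> 0\<close> and \<open>(y + 1) z \<noteq> 2\<close>, the
  nonvanishing of the two split sequences: they make the tridiagonal forms irreducible, the split
  bases nondegenerate and the products \<open>E\<^sub>i A\<^sup>* E\<^sub>i\<^sub>\<plusminus>\<^sub>1\<close> nonzero.
\<close>

declare vec_of_list_Cons [simp del]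

definition mat3 :: "'a \<Rightarrow> 'a \<Rightarrow> 'a \<Rightarrow> 'a \<Rightarrow> 'a \<Rightarrow> 'a \<Rightarrow> 'a \<Rightarrow> 'a \<Rightarrow> 'a \<Rightarrow> 'a mat" where
  "mat3 a b c d e f g h k = mat_of_rows_list 3 [[a, b, c], [d, e, f], [g, h, k]]"

lemma mat3_carrier [simp]: "mat3 a b c d e f g h k \<in> carrier_mat 3 3"
  by (simp add: mat3_def mat_of_rows_list_def numeral_3_eq_3)

lemma dim_mat3 [simp]:
  "dim_row (mat3 a b c d e f g h k) = 3" "dim_col (mat3 a b c d e f g h k) = 3"
  by (simp_all add: mat3_def mat_of_rows_list_def)

lemma index_mat3 [simp]:
  assumes "i < 3" "j < 3"
  shows "mat3 a b c d e f g h k $$ (i, j) =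
    (if i = 0 then (if j = 0 then a else if j = 1 then b else c)
     else if i = 1 then (if j = 0 then d else if j = 1 then e else f)
     else (if j = 0 then g else if j = 1 then h else k))"
  using assms by (auto simp: mat3_def mat_of_rows_list_def less_Suc_eq numeral_3_eq_3)

lemma less_3_cases: "(i::nat) < 3 \<longleftrightarrow> i = 0 \<or> i = 1 \<or> i = 2"
  by auto

lemma mat3_eqI:
  assumes "M \<in> carrier_mat 3 3" "N \<in> carrier_mat 3 3"
    and "\<And>i j. i \<in> {0, 1, 2} \<Longrightarrow> j \<in> {0, 1, 2} \<Longrightarrow> M $$ (i, j) = N $$ (i, j)"
  shows "M = N"
  using assms by (intro eq_matI) (auto simp: less_3_cases)

lemma mat3_eq_iff [simp]:
  "mat3 a b c d e f g h k = mat3 a' b' c' d' e' f' g' h' k' \<longleftrightarrow>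
   a = a' \<and> b = b' \<and> c = c' \<and> d = d' \<and> e = e' \<and> f = f' \<and> g = g' \<and> h = h' \<and> k = k'"
    (is "?M = ?N \<longleftrightarrow> _")
proof
  assume "?M = ?N"
  then have "?M $$ (i, j) = ?N $$ (i, j)" for i j by simp
  from this[of 0 0] this[of 0 1] this[of 0 2] this[of 1 0] this[of 1 1] this[of 1 2]
    this[of 2 0] this[of 2 1] this[of 2 2]
  show "a = a' \<and> b = b' \<and> c = c' \<and> d = d' \<and> e = e' \<and> f = f' \<and> g = g' \<and> h = h' \<and> k = k'"
    by simp
qed simp

lemma mat3_eta:
  assumes "M \<in> carrier_mat 3 3"
  shows "M = mat3 (M$$(0,0)) (M$$(0,1)) (M$$(0,2)) (M$$(1,0)) (M$$(1,1)) (M$$(1,2))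
                  (M$$(2,0)) (M$$(2,1)) (M$$(2,2))"
  using assms by (intro mat3_eqI) auto

lemma times_mat3 [simp]: "mat3 a b c d e f g h k * mat3 a' b' c' d' e' f' g' h' k' =
  mat3 (a*a' + b*d' + c*g') (a*b' + b*e' + c*h') (a*c' + b*f' + c*k')
       (d*a' + e*d' + f*g') (d*b' + e*e' + f*h') (d*c' + e*f' + f*k')
       (g*a' + h*d' + k*g') (g*b' + h*e' + k*h') (g*c' + h*f' + k*k')"
  by (intro mat3_eqI) (auto simp: scalar_prod_def numeral_3_eq_3)

lemma plus_mat3 [simp]: "mat3 a b c d e f g h k + mat3 a' b' c' d' e' f' g' h' k' =
  mat3 (a+a') (b+b') (c+c') (d+d') (e+e') (f+f') (g+g') (h+h') (k+k')"
  by (intro mat3_eqI) auto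

lemma minus_mat3 [simp]: "mat3 a b c d e f g h k - mat3 a' b' c' d' e' f' g' h' k' =
  mat3 (a-a') (b-b') (c-c') (d-d') (e-e') (f-f') (g-g') (h-h') (k-k')"
  by (intro mat3_eqI) auto

lemma smult_mat3 [simp]: "r \<cdot>\<^sub>m mat3 a b c d e f g h k =
  mat3 (r*a) (r*b) (r*c) (r*d) (r*e) (r*f) (r*g) (r*h) (r*k)"
  by (intro mat3_eqI) auto

lemma one_mat3: "1\<^sub>m 3 = mat3 1 0 0 0 1 0 0 0 1"
  by (intro mat3_eqI) auto

lemma zero_mat3: "0\<^sub>m 3 3 = mat3 0 0 0 0 0 0 0 0 0"
  by (intro mat3_eqI) auto

lemma mult_mat3_vec3 [simp]:
  "mat3 a b c d e f g h k *\<^sub>v vec_of_list [p, q, r] =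
   vec_of_list [a*p + b*q + c*r, d*p + e*q + f*r, g*p + h*q + k*r]"
  by (intro eq_vecI)
    (auto simp: scalar_prod_def mat3_def mat_of_rows_list_def vec_of_list_index less_Suc_eq numeral_3_eq_3)

lemma vec3_eq_iff [simp]:
  "vec_of_list [a, b, c] = vec_of_list [a', b', c'] \<longleftrightarrow> a = a' \<and> b = b' \<and> c = c'"
  by (metis list.inject list_vec)

lemma vec3_carrier [simp]: "vec_of_list [a, b, c] \<in> carrier_vec 3"
  unfolding carrier_vec_def mem_Collect_eq dim_vec_of_list by (simp add: eval_nat_numeral)

lemma zero_vec3: "0\<^sub>v 3 = vec_of_list [0, 0, 0]"
  by (intro eq_vecI) (auto simp: less_Suc_eq eval_nat_numeral vec_of_list_index)

lemma mat_of_cols_vec3 [simp]: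
  "mat_of_cols 3 [vec_of_list [a, d, g], vec_of_list [b, e, h], vec_of_list [c, f, k]] =
   mat3 a b c d e f g h k"
  by (intro mat3_eqI) (auto simp: mat_of_cols_def vec_of_list_index)

lemma irred_tridiag_mat3_iff:
  "irred_tridiag 3 (mat3 a b c d e f g h k) \<longleftrightarrow>
   c = 0 \<and> g = 0 \<and> b \<noteq> 0 \<and> d \<noteq> 0 \<and> f \<noteq> 0 \<and> h \<noteq> 0"
proof -
  have "(\<forall>i. i + 1 < 3 \<longrightarrow> P i) \<longleftrightarrow> P 0 \<and> P 1" for P :: "nat \<Rightarrow> bool"
    by (auto simp: less_Suc_eq numeral_3_eq_3)
  then show ?thesis
    unfolding irred_tridiag_def by (auto simp: less_3_cases)
qed

lemma diagonal_mat_mat3_iff: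
  "diagonal_mat (mat3 a b c d e f g h k) \<longleftrightarrow>
   b = 0 \<and> c = 0 \<and> d = 0 \<and> f = 0 \<and> g = 0 \<and> h = 0"
  unfolding diagonal_mat_def by (auto simp: less_3_cases)

lemma upper_bidiag_2:
  "upper_bidiag 2 \<theta>s \<phi> = mat3 (\<theta>s 0) (\<phi> 1) 0 0 (\<theta>s 1) (\<phi> 2) 0 0 (\<theta>s 2)"
  by (intro mat3_eqI) (auto simp: upper_bidiag_def)

definition det3 :: "'a::comm_ring_1 mat \<Rightarrow> 'a" where
  "det3 M = M$$(0,0) * (M$$(1,1) * M$$(2,2) - M$$(1,2) * M$$(2,1))
          - M$$(0,1) * (M$$(1,0) * M$$(2,2) - M$$(1,2) * M$$(2,0))
          + M$$(0,2) * (M$$(1,0) * M$$(2,1) - M$$(1,1) * M$$(2,0))"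

definition adj3 :: "'a::comm_ring_1 mat \<Rightarrow> 'a mat" where
  "adj3 M = mat3
     (M$$(1,1) * M$$(2,2) - M$$(1,2) * M$$(2,1)) (M$$(0,2) * M$$(2,1) - M$$(0,1) * M$$(2,2))
     (M$$(0,1) * M$$(1,2) - M$$(0,2) * M$$(1,1))
     (M$$(1,2) * M$$(2,0) - M$$(1,0) * M$$(2,2)) (M$$(0,0) * M$$(2,2) - M$$(0,2) * M$$(2,0))
     (M$$(0,2) * M$$(1,0) - M$$(0,0) * M$$(1,2))
     (M$$(1,0) * M$$(2,1) - M$$(1,1) * M$$(2,0)) (M$$(0,1) * M$$(2,0) - M$$(0,0) * M$$(2,1))
     (M$$(0,0) * M$$(1,1) - M$$(0,1) * M$$(1,0))"

lemma mat3_mult_adj3: "M \<in> carrier_mat 3 3 \<Longrightarrow> M * adj3 M = det3 M \<cdot>\<^sub>m 1\<^sub>m 3"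
  by (subst (1 2 3) mat3_eta[of M]) (simp_all add: adj3_def det3_def one_mat3 algebra_simps)

lemma adj3_mult_mat3: "M \<in> carrier_mat 3 3 \<Longrightarrow> adj3 M * M = det3 M \<cdot>\<^sub>m 1\<^sub>m 3"
  by (subst (1 2 3) mat3_eta[of M]) (simp_all add: adj3_def det3_def one_mat3 algebra_simps)

lemma basis_change_adj3:
  fixes P :: "'a::field mat"
  assumes P: "P \<in> carrier_mat 3 3" and det: "det3 P \<noteq> 0"
  shows "basis_change 3 P (inverse (det3 P) \<cdot>\<^sub>m adj3 P)"
proof -
  have adj: "adj3 P \<in> carrier_mat 3 3" by (simp add: adj3_def)
  have "P * (inverse (det3 P) \<cdot>\<^sub>m adj3 P) = inverse (det3 P) \<cdot>\<^sub>m (P * adj3 P)"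
    using mult_smult_distrib[OF P adj] .
  also have "\<dots> = 1\<^sub>m 3"
    using det by (simp add: mat3_mult_adj3[OF P] one_mat3)
  finally have right: "P * (inverse (det3 P) \<cdot>\<^sub>m adj3 P) = 1\<^sub>m 3" .
  have "(inverse (det3 P) \<cdot>\<^sub>m adj3 P) * P = inverse (det3 P) \<cdot>\<^sub>m (adj3 P * P)"
    using mult_smult_assoc_mat[OF adj P] .
  also have "\<dots> = 1\<^sub>m 3"
    using det by (simp add: adj3_mult_mat3[OF P] one_mat3)
  finally show ?thesis
    using right P adj unfolding basis_change_def by simp
qed

lemma basis_change_conjugate:
  assumes PQ: "basis_change n P Q"
    and M: "M \<in> carrier_mat n n" and T: "T \<in> carrier_mat n n"
    and MP: "M * P = P * T"
  shows "Q * M * P = T"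
proof -
  have P: "P \<in> carrier_mat n n" and Q: "Q \<in> carrier_mat n n" and QP: "Q * P = 1\<^sub>m n"
    using PQ unfolding basis_change_def by auto
  have "Q * M * P = Q * (P * T)"
    using assoc_mult_mat[OF Q M P] MP by simp
  also have "\<dots> = T"
    using assoc_mult_mat[OF Q P T] QP T by simp
  finally show ?thesis .
qed

lemma two_neq_zero_if_CHAR_neq_2:
  assumes "CHAR('a::field) \<noteq> 2"
  shows "(2::'a) \<noteq> 0"
proof
  assume "(2::'a) = 0"
  then have "CHAR('a) dvd 2"
    using of_nat_eq_0_iff_char_dvd[of 2, where 'a='a] by simp
  then have "CHAR('a) \<in> {1, 2}"
    using dvd_imp_le[of "CHAR('a)" 2] by (cases "CHAR('a)") (auto simp: le_Suc_eq)
  with assms show False by simp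
qed

definition leonard_A :: "'a::field \<Rightarrow> 'a mat" where
  "leonard_A z = mat3 0 z 0 1 0 (1 - z) 0 1 0"

definition leonard_As :: "'a::field \<Rightarrow> 'a \<Rightarrow> 'a mat" where
  "leonard_As y z = mat3 0 (y * z) 0 1 0 (y * z - 1) 0 (-1) 0"

lemma leonard_A_carrier [simp]: "leonard_A z \<in> carrier_mat 3 3"
  by (simp add: leonard_A_def)

lemma leonard_As_carrier [simp]: "leonard_As y z \<in> carrier_mat 3 3"
  by (simp add: leonard_As_def)

definition idem3 :: "'a::field mat \<Rightarrow> nat \<Rightarrow> 'a mat" where
  "idem3 M i =
     (if i = 0 then (1/2) \<cdot>\<^sub>m (M * M + M)
      else if i = 1 then 1\<^sub>m 3 - M * M
      else (1/2) \<cdot>\<^sub>m (M * M - M))"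

lemma le_2_cases: "(i::nat) \<le> 2 \<longleftrightarrow> i = 0 \<or> i = 1 \<or> i = 2"
  by auto

lemma sum_le_2: "(\<Sum>i\<le>(2::nat). f i) = f 0 + f 1 + f 2"
  by (simp add: numeral_2_eq_2)

lemma inj_on_eigenvalues:
  assumes "(2::'a::field) \<noteq> 0"
  shows "inj_on (\<lambda>i. 1 - of_nat i :: 'a) {0..2}"
proof -
  have "(1::'a) \<noteq> 2" using assms by (metis add_cancel_right_right one_add_one zero_neq_one)
  then show ?thesis using assms by (auto simp: inj_on_def le_2_cases)
qed

lemma split_vec_columns_3:
  "map (split_vec A \<theta> v) [0..<3] =
   [v, (A - \<theta> 0 \<cdot>\<^sub>m 1\<^sub>m (dim_row A)) *\<^sub>v v,
    (A - \<theta> 1 \<cdot>\<^sub>m 1\<^sub>m (dim_row A)) *\<^sub>v ((A - \<theta> 0 \<cdot>\<^sub>m 1\<^sub>m (dim_row A)) *\<^sub>v v)]"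
  by (simp add: numeral_3_eq_3)

lemma basis_change_det3:
  fixes P :: "'a::field mat"
  assumes "P \<in> carrier_mat 3 3" "det3 P \<noteq> 0"
  obtains Q where "basis_change 3 P Q"
    and "\<And>M T. M \<in> carrier_mat 3 3 \<Longrightarrow> T \<in> carrier_mat 3 3 \<Longrightarrow> M * P = P * T \<Longrightarrow> Q * M * P = T"
  using basis_change_adj3[OF assms] basis_change_conjugate by blast

lemma first_split_seq_3I:
  fixes B :: "'a::field mat"
  assumes B: "B \<in> carrier_mat 3 3"
    and v: "v \<in> carrier_vec 3" "v \<noteq> 0\<^sub>v 3" "Es 0 *\<^sub>v v = v"
    and U: "mat_of_cols 3 (map (split_vec A \<theta> v) [0..<3]) = U"
    and det: "det3 U \<noteq> 0"
    and BU: "B * U = U * upper_bidiag 2 \<theta>s \<phi>"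
  shows "first_split_seq 2 A E \<theta> B Es \<theta>s \<phi>"
proof -
  have "U \<in> carrier_mat 3 3"
    using U by auto
  then obtain Q where Q: "basis_change 3 U Q"
    and conj: "\<And>M T. M \<in> carrier_mat 3 3 \<Longrightarrow> T \<in> carrier_mat 3 3 \<Longrightarrow> M * U = U * T \<Longrightarrow> Q * M * U = T"
    using basis_change_det3 det by blast
  moreover have "Q * B * U = upper_bidiag 2 \<theta>s \<phi>"
    using conj[OF B _ BU] by (simp add: upper_bidiag_def)
  ultimately show ?thesis
    unfolding first_split_seq_def Let_def using v U by auto
qed

context
  fixes y z :: "'a::field"
  assumes two: "(2::'a) \<noteq> 0"
begin

text \<open>Only powers of two occur as denominators, so with this rule \<open>field_simps\<close> discharges all
  its side conditions from \<open>2 \<noteq> 0\<close>.\<close>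

lemma numeral_Bit0_eq_zero_iff [simp]: "(numeral (Num.Bit0 n) :: 'a) = 0 \<longleftrightarrow> numeral n = (0::'a)"
  using two by (metis mult_2 mult_eq_0_iff numeral_Bit0)

lemma prim_idem_seq_A: "prim_idem_seq 2 (leonard_A z) (idem3 (leonard_A z)) (\<lambda>i. 1 - of_nat i)"
  unfolding prim_idem_seq_def using inj_on_eigenvalues[OF two]
  by (simp add: le_2_cases less_3_cases sum_le_2 idem3_def leonard_A_def one_mat3 zero_mat3)
    (auto simp: field_simps)

lemma prim_idem_seq_As: "prim_idem_seq 2 (leonard_As y z) (idem3 (leonard_As y z)) (\<lambda>i. 1 - of_nat i)"
  unfolding prim_idem_seq_def using inj_on_eigenvalues[OF two]
  by (simp add: le_2_cases less_3_cases sum_le_2 idem3_def leonard_As_def one_mat3 zero_mat3)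
    (auto simp: field_simps)

context
  assumes phi: "(y + 1) * z \<noteq> 2" and phi': "(y + 1) * z \<noteq> 0"
begin

lemma leonard_system_A_As:
  "leonard_system 2 (leonard_A z) (idem3 (leonard_A z)) (\<lambda>i. 1 - of_nat i)
                    (leonard_As y z) (idem3 (leonard_As y z)) (\<lambda>i. 1 - of_nat i)"
proof -
  let ?A = "leonard_A z" and ?B = "leonard_As y z"
  let ?E = "idem3 ?A" and ?Es = "idem3 ?B"
  have far: "?E 0 * ?B * ?E 2 = 0\<^sub>m 3 3" "?E 2 * ?B * ?E 0 = 0\<^sub>m 3 3"
    "?Es 0 * ?A * ?Es 2 = 0\<^sub>m 3 3" "?Es 2 * ?A * ?Es 0 = 0\<^sub>m 3 3"
    by (simp_all add: idem3_def leonard_A_def leonard_As_def one_mat3 zero_mat3)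
      (simp_all add: field_simps)
  have near: "(?E 0 * ?B * ?E 1) $$ (2,0) = - (((y + 1) * z - 2) / 2)"
    "(?E 1 * ?B * ?E 0) $$ (2,0) = - ((y + 1) * z / 2)"
    "(?E 1 * ?B * ?E 2) $$ (2,0) = (y + 1) * z / 2"
    "(?E 2 * ?B * ?E 1) $$ (2,0) = ((y + 1) * z - 2) / 2"
    "(?Es 0 * ?A * ?Es 1) $$ (2,0) = ((y + 1) * z - 2) / 2"
    "(?Es 1 * ?A * ?Es 0) $$ (2,0) = (y + 1) * z / 2"
    "(?Es 1 * ?A * ?Es 2) $$ (2,0) = - ((y + 1) * z / 2)"
    "(?Es 2 * ?A * ?Es 1) $$ (2,0) = - (((y + 1) * z - 2) / 2)"
    by (simp_all add: idem3_def leonard_A_def leonard_As_def one_mat3)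
      (simp_all add: field_simps)
  have nz: "(y + 1) * z / 2 \<noteq> 0" "((y + 1) * z - 2) / 2 \<noteq> 0"
    using phi phi' two by simp_all
  have nonzero_if_entry: "M \<noteq> 0\<^sub>m 3 3" if "M $$ (2,0) \<noteq> 0" for M :: "'a mat"
    using that by auto
  have "?E 0 * ?B * ?E 1 \<noteq> 0\<^sub>m 3 3" "?E 1 * ?B * ?E 0 \<noteq> 0\<^sub>m 3 3"
    "?E 1 * ?B * ?E 2 \<noteq> 0\<^sub>m 3 3" "?E 2 * ?B * ?E 1 \<noteq> 0\<^sub>m 3 3"
    "?Es 0 * ?A * ?Es 1 \<noteq> 0\<^sub>m 3 3" "?Es 1 * ?A * ?Es 0 \<noteq> 0\<^sub>m 3 3"
    "?Es 1 * ?A * ?Es 2 \<noteq> 0\<^sub>m 3 3" "?Es 2 * ?A * ?Es 1 \<noteq> 0\<^sub>m 3 3"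
    by (intro nonzero_if_entry, unfold near neg_equal_0_iff_equal, insert nz, assumption)+
  then show ?thesis
    unfolding leonard_system_def using prim_idem_seq_A prim_idem_seq_As far
    by (auto simp: le_2_cases)
qed

lemma leonard_pair_A_As: "leonard_pair 2 (leonard_A z) (leonard_As y z)"
proof -
  let ?A = "leonard_A z" and ?B = "leonard_As y z"
  \<comment> \<open>the columns of \<open>?P\<close> (resp. \<open>?P'\<close>) are eigenvectors of \<open>A\<^sup>*\<close> (resp. \<open>A\<close>) for \<open>1, 0, -1\<close>\<close>
  let ?P = "mat3 (y * z) (1 - y * z) (- (y * z)) 1 0 1 (-1) 1 1"
  let ?T = "mat3 ((y + 1) * z - 1) (- (((y + 1) * z - 2) / 2)) 0 ((y + 1) * z) 0 ((y + 1) * z)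
                 0 (- (((y + 1) * z - 2) / 2)) (1 - (y + 1) * z)"
  let ?P' = "mat3 z (z - 1) z 1 0 (-1) 1 1 1"
  let ?T' = "mat3 ((y + 1) * z - 1) (((y + 1) * z - 2) / 2) 0 (- ((y + 1) * z)) 0 ((y + 1) * z)
                  0 (- (((y + 1) * z - 2) / 2)) (1 - (y + 1) * z)"
  let ?D = "mat3 1 0 0 0 0 0 0 0 (-1)"
  have "det3 ?P = - 2" "det3 ?P' = 2"
    by (simp_all add: det3_def algebra_simps)
  then have det: "det3 ?P \<noteq> 0" "det3 ?P' \<noteq> 0"
    using two by simp_all
  obtain Q where Q: "basis_change 3 ?P Q"
    "\<And>M T. M \<in> carrier_mat 3 3 \<Longrightarrow> T \<in> carrier_mat 3 3 \<Longrightarrow> M * ?P = ?P * T \<Longrightarrow> Q * M * ?P = T"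
    using basis_change_det3[OF mat3_carrier det(1)] by blast
  obtain Q' where Q': "basis_change 3 ?P' Q'"
    "\<And>M T. M \<in> carrier_mat 3 3 \<Longrightarrow> T \<in> carrier_mat 3 3 \<Longrightarrow> M * ?P' = ?P' * T \<Longrightarrow> Q' * M * ?P' = T"
    using basis_change_det3[OF mat3_carrier det(2)] by blast
  have eig: "?A * ?P = ?P * ?T" "?B * ?P = ?P * ?D" "?B * ?P' = ?P' * ?T'" "?A * ?P' = ?P' * ?D"
    by (simp_all add: leonard_A_def leonard_As_def) (simp_all add: field_simps)
  have "Q * ?A * ?P = ?T" "Q * ?B * ?P = ?D" "Q' * ?B * ?P' = ?T'" "Q' * ?A * ?P' = ?D"
    using Q(2)[OF leonard_A_carrier mat3_carrier eig(1)] Q(2)[OF leonard_As_carrier mat3_carrier eig(2)]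
      Q'(2)[OF leonard_As_carrier mat3_carrier eig(3)] Q'(2)[OF leonard_A_carrier mat3_carrier eig(4)]
    by simp_all
  then have "irred_tridiag 3 (Q * ?A * ?P)" "diagonal_mat (Q * ?B * ?P)"
    "irred_tridiag 3 (Q' * ?B * ?P')" "diagonal_mat (Q' * ?A * ?P')"
    using phi phi' two by (simp_all add: irred_tridiag_mat3_iff diagonal_mat_mat3_iff)
  moreover have "(2::nat) + 1 = 3"
    by simp
  ultimately show ?thesis
    unfolding leonard_pair_def using Q(1) Q'(1) by (metis leonard_A_carrier leonard_As_carrier)
qed

lemma first_split_seq_A_As:
  "first_split_seq 2 (leonard_A z) E (\<lambda>i. 1 - of_nat i) (leonard_As y z) (idem3 (leonard_As y z))
     (\<lambda>i. 1 - of_nat i) (\<lambda>_. (y + 1) * z - 2)"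
proof (rule first_split_seq_3I)
  let ?U = "mat3 (y * z) (z - y * z) (z * ((y + 1) * z - 2)) 1 ((y + 1) * z - 2) (2 - (y + 1) * z)
                 (-1) 2 ((y + 1) * z - 2)"
  \<comment> \<open>\<open>?v\<close> is the first column of the eigenbasis of \<open>A\<^sup>*\<close>, so it lies in \<open>E\<^sup>*\<^sub>0V\<close>\<close>
  let ?v = "vec_of_list [y * z, 1, -1]"
  show "mat_of_cols 3 (map (split_vec (leonard_A z) (\<lambda>i. 1 - of_nat i) ?v) [0..<3]) = ?U"
    by (simp add: split_vec_columns_3 leonard_A_def one_mat3)
      (simp add: algebra_simps)
  have "det3 ?U = z^2 * ((y + 1) * z - 2) * (y + 1)^2"
    by (simp add: det3_def algebra_simps power2_eq_square)
  then show "det3 ?U \<noteq> 0"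
    using phi phi' by simp
  show "leonard_As y z * ?U = ?U * upper_bidiag 2 (\<lambda>i. 1 - of_nat i) (\<lambda>_. (y + 1) * z - 2)"
    by (simp add: upper_bidiag_2 leonard_As_def) (simp add: algebra_simps)
  show "idem3 (leonard_As y z) 0 *\<^sub>v ?v = ?v"
    by (simp add: idem3_def leonard_As_def) (simp add: field_simps)
qed (simp_all add: zero_vec3)


lemma second_split_seq_A_As:
  "first_split_seq 2 (leonard_A z) E (\<lambda>i. 1 - of_nat (2 - i)) (leonard_As y z) (idem3 (leonard_As y z))
     (\<lambda>i. 1 - of_nat i) (\<lambda>_. (y + 1) * z)"
proof (rule first_split_seq_3I)
  let ?U = "mat3 (y * z) ((y + 1) * z) (z * ((y + 1) * z)) 1 ((y + 1) * z) ((y + 1) * z)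
                 (-1) 0 ((y + 1) * z)"
  let ?v = "vec_of_list [y * z, 1, -1]"
  show "mat_of_cols 3 (map (split_vec (leonard_A z) (\<lambda>i. 1 - of_nat (2 - i)) ?v) [0..<3]) = ?U"
    by (simp add: split_vec_columns_3 leonard_A_def one_mat3) (simp add: algebra_simps)
  have "det3 ?U = ((y + 1) * z)^2 * ((y + 1) * z - 2)"
    by (simp add: det3_def algebra_simps power2_eq_square)
  then show "det3 ?U \<noteq> 0"
    using phi phi' by simp
  show "leonard_As y z * ?U = ?U * upper_bidiag 2 (\<lambda>i. 1 - of_nat i) (\<lambda>_. (y + 1) * z)"
    by (simp add: upper_bidiag_2 leonard_As_def) (simp add: algebra_simps)
  show "idem3 (leonard_As y z) 0 *\<^sub>v ?v = ?v"
    by (simp add: idem3_def leonard_As_def) (simp add: field_simps)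
qed (simp_all add: zero_vec3)

lemma parameter_array_A_As:
  "parameter_array 2 (leonard_A z) (leonard_As y z) (\<lambda>i. 1 - of_nat i) (\<lambda>i. 1 - of_nat i)
     (\<lambda>_. (y + 1) * z - 2) (\<lambda>_. (y + 1) * z)"
  unfolding parameter_array_def
  using leonard_system_A_As first_split_seq_A_As second_split_seq_A_As by blast

end
end

theorem proposition4p4:
  fixes y z :: "'a::field"
  assumes "alg_closed TYPE('a)"
    and "CHAR('a) \<noteq> 2"
    and "y \<noteq> 0" and "z \<noteq> 0" and "y \<noteq> 1" and "y \<noteq> -1" and "z \<noteq> 1"
    and "y * z \<noteq> 1" and "(y + 1) * z \<noteq> 2"
  shows "leonard_pair 2 (mat_of_rows_list 3 [[0, z, 0], [1, 0, 1 - z], [0, 1, 0]])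
                        (mat_of_rows_list 3 [[0, y * z, 0], [1, 0, y * z - 1], [0, -1, 0]]) \<and>
         parameter_array 2 (mat_of_rows_list 3 [[0, z, 0], [1, 0, 1 - z], [0, 1, 0]])
                           (mat_of_rows_list 3 [[0, y * z, 0], [1, 0, y * z - 1], [0, -1, 0]])
                           (\<lambda>i. 1 - of_nat i) (\<lambda>i. 1 - of_nat i)
                           (\<lambda>_. (y + 1) * z - 2) (\<lambda>_. (y + 1) * z)"
proof -
  have two: "(2::'a) \<noteq> 0"
    using assms(2) by (rule two_neq_zero_if_CHAR_neq_2)
  have "y + 1 \<noteq> 0"
    using \<open>y \<noteq> -1\<close> eq_neg_iff_add_eq_0[of y 1] by simp
  then have "(y + 1) * z \<noteq> 0"
    using \<open>z \<noteq> 0\<close> by simp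
  with two \<open>(y + 1) * z \<noteq> 2\<close> show ?thesis
    using leonard_pair_A_As parameter_array_A_As
    unfolding leonard_A_def leonard_As_def mat3_def by blast
qed

end
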